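(* Let $(A,B)$ be a finite-dimensional associative superalgebra over an algebraically closed field $\mathbb{K}$ of characteristic zero endowed with a homogeneous symmetric structure $B$, and let $I$ be a minimal graded two-sided ideal of $A$. Then either $I$ is simple, or $I$ has null product and $AI=I=IA$, or $I=\mathbb{K}x$ where $x$ is a homogeneous element of $\mathrm{Ann}(A)$.
   Context: A superalgebra is $\mathbb{Z}_2$-graded, $A=A_{\bar 0}\oplus A_{\bar 1}$, $A_\alpha A_\beta\subseteq A_{\alpha+\beta}$. A homogeneous symmetric structure on $A$ is a bilinear form $B$ which is either even ($B(A_{\bar 0},A_{\bar 1})=0$) or odd ($B(A_{\bar 0},A_{\bar 0})=B(A_{\bar 1},A_{\bar 1})=0$), and is supersymmetric ($B(x,y)=(-1)^{|x||y|}B(y,x)$ for homogeneous $x,y$), associative ($B(xy,z)=B(x,yz)$) and non-degenerate. A graded two-sided ideal $I$ is minimal if $I\notin\{\{0\},A\}$ and every graded two-sided ideal of $A$ contained in $I$ is $\{0\}$ or $I$. A superalgebra is simple if its product is non-zero and its only graded two-sided ideals are $\{0\}$ and itself. $\mathrm{Ann}(A)=\{x\in A: xA=Ax=\{0\}\}$. *)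

theory Defs
  imports Main "HOL-Computational_Algebra.Polynomial"
begin

definition algebraically_closed :: "('k::field) itself \<Rightarrow> bool" where
  "algebraically_closed _ \<longleftrightarrow> (\<forall>p::'k poly. 0 < degree p \<longrightarrow> (\<exists>x. poly p x = 0))"

text \<open>A finite-dimensional associative superalgebra: the whole type 'v is the
  underlying K-vector space (scalar multiplication scale), mul is the product,
  A0 and A1 are the even and odd parts.\<close>
definition fd_assoc_superalgebra ::
  "('k::field \<Rightarrow> 'v::ab_group_add \<Rightarrow> 'v) \<Rightarrow> ('v \<Rightarrow> 'v \<Rightarrow> 'v) \<Rightarrow> 'v set \<Rightarrow> 'v set \<Rightarrow> bool" where
  "fd_assoc_superalgebra scale mul A0 A1 \<longleftrightarrow>
     vector_space scale \<and>
     (\<exists>S. finite S \<and> module.span scale S = UNIV) \<and>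
     (\<forall>x y z. mul (x + y) z = mul x z + mul y z) \<and>
     (\<forall>x y z. mul x (y + z) = mul x y + mul x z) \<and>
     (\<forall>c x y. mul (scale c x) y = scale c (mul x y)) \<and>
     (\<forall>c x y. mul x (scale c y) = scale c (mul x y)) \<and>
     (\<forall>x y z. mul (mul x y) z = mul x (mul y z)) \<and>
     module.subspace scale A0 \<and> module.subspace scale A1 \<and>
     A0 \<inter> A1 = {0} \<and> (\<forall>v. \<exists>a\<in>A0. \<exists>b\<in>A1. v = a + b) \<and>
     (\<forall>x\<in>A0. \<forall>y\<in>A0. mul x y \<in> A0) \<and>
     (\<forall>x\<in>A0. \<forall>y\<in>A1. mul x y \<in> A1) \<and>
     (\<forall>x\<in>A1. \<forall>y\<in>A0. mul x y \<in> A1) \<and>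
     (\<forall>x\<in>A1. \<forall>y\<in>A1. mul x y \<in> A0)"

definition homogeneous_symmetric_structure ::
  "('k::field \<Rightarrow> 'v::ab_group_add \<Rightarrow> 'v) \<Rightarrow> ('v \<Rightarrow> 'v \<Rightarrow> 'v) \<Rightarrow> 'v set \<Rightarrow> 'v set
     \<Rightarrow> ('v \<Rightarrow> 'v \<Rightarrow> 'k) \<Rightarrow> bool" where
  "homogeneous_symmetric_structure scale mul A0 A1 B \<longleftrightarrow>
     (\<forall>x y z. B (x + y) z = B x z + B y z) \<and>
     (\<forall>x y z. B x (y + z) = B x y + B x z) \<and>
     (\<forall>c x y. B (scale c x) y = c * B x y) \<and>
     (\<forall>c x y. B x (scale c y) = c * B x y) \<and>
     ((\<forall>x\<in>A0. \<forall>y\<in>A1. B x y = 0) \<or>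
      ((\<forall>x\<in>A0. \<forall>y\<in>A0. B x y = 0) \<and> (\<forall>x\<in>A1. \<forall>y\<in>A1. B x y = 0))) \<and>
     (\<forall>x\<in>A0. \<forall>y\<in>A0. B x y = B y x) \<and>
     (\<forall>x\<in>A0. \<forall>y\<in>A1. B x y = B y x) \<and>
     (\<forall>x\<in>A1. \<forall>y\<in>A0. B x y = B y x) \<and>
     (\<forall>x\<in>A1. \<forall>y\<in>A1. B x y = - B y x) \<and>
     (\<forall>x y z. B (mul x y) z = B x (mul y z)) \<and>
     (\<forall>x. (\<forall>y. B x y = 0) \<longrightarrow> x = 0) \<and>
     (\<forall>y. (\<forall>x. B x y = 0) \<longrightarrow> y = 0)"

definition graded_ideal_in ::
  "('k::field \<Rightarrow> 'v::ab_group_add \<Rightarrow> 'v) \<Rightarrow> ('v \<Rightarrow> 'v \<Rightarrow> 'v) \<Rightarrow> 'v set \<Rightarrow> 'v set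
     \<Rightarrow> 'v set \<Rightarrow> 'v set \<Rightarrow> bool" where
  "graded_ideal_in scale mul A0 A1 S J \<longleftrightarrow>
     J \<subseteq> S \<and> module.subspace scale J \<and>
     (\<forall>x\<in>J. \<exists>a\<in>J \<inter> A0. \<exists>b\<in>J \<inter> A1. x = a + b) \<and>
     (\<forall>a\<in>S. \<forall>x\<in>J. mul a x \<in> J \<and> mul x a \<in> J)"

abbreviation graded_ideal where
  "graded_ideal scale mul A0 A1 J \<equiv> graded_ideal_in scale mul A0 A1 UNIV J"

definition minimal_graded_ideal ::
  "('k::field \<Rightarrow> 'v::ab_group_add \<Rightarrow> 'v) \<Rightarrow> ('v \<Rightarrow> 'v \<Rightarrow> 'v) \<Rightarrow> 'v set \<Rightarrow> 'v set
     \<Rightarrow> 'v set \<Rightarrow> bool" where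
  "minimal_graded_ideal scale mul A0 A1 I \<longleftrightarrow>
     graded_ideal scale mul A0 A1 I \<and> I \<noteq> {0} \<and> I \<noteq> UNIV \<and>
     (\<forall>J. graded_ideal scale mul A0 A1 J \<and> J \<subseteq> I \<longrightarrow> J = {0} \<or> J = I)"

definition simple_sub ::
  "('k::field \<Rightarrow> 'v::ab_group_add \<Rightarrow> 'v) \<Rightarrow> ('v \<Rightarrow> 'v \<Rightarrow> 'v) \<Rightarrow> 'v set \<Rightarrow> 'v set
     \<Rightarrow> 'v set \<Rightarrow> bool" where
  "simple_sub scale mul A0 A1 I \<longleftrightarrow>
     (\<exists>x\<in>I. \<exists>y\<in>I. mul x y \<noteq> 0) \<and>
     (\<forall>J. graded_ideal_in scale mul A0 A1 I J \<longrightarrow> J = {0} \<or> J = I)"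

definition annihilator :: "('v::zero \<Rightarrow> 'v \<Rightarrow> 'v) \<Rightarrow> 'v set" where
  "annihilator mul = {x. \<forall>a. mul x a = 0 \<and> mul a x = 0}"

end

theory Submission imports Defs begin

text \<open>
  If \<open>I\<cdot>I \<noteq> 0\<close>, the span of \<open>I\<cdot>I\<close> is a nonzero graded ideal inside \<open>I\<close>, hence equal
  to \<open>I\<close>, and so \<open>I\<close> is spanned by \<open>I\<cdot>I\<cdot>I\<close>. A nonzero graded ideal \<open>J\<close> of the
  subalgebra \<open>I\<close> generates the ideal \<open>J + AJ + JA + AJA\<close> of \<open>A\<close>, which by minimality is
  again \<open>I\<close>; multiplying it by \<open>I\<close> on both sides lands in \<open>J\<close>, so \<open>I\<cdot>I\<cdot>I \<subseteq> J\<close> and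
  \<open>J = I\<close>. If \<open>I\<cdot>I = 0\<close>, associativity and non-degeneracy of \<open>B\<close> give
  \<open>x\<cdot>A = 0 \<longleftrightarrow> A\<cdot>x = 0\<close>; so either \<open>A\<cdot>I\<close> and \<open>I\<cdot>A\<close> are both nonzero and span \<open>I\<close>, or \<open>I\<close>
  lies in the annihilator and is spanned by any nonzero homogeneous element of it.
\<close>

locale assoc_superalgebra = vector_space scale
  for scale :: "'k::field \<Rightarrow> 'v::ab_group_add \<Rightarrow> 'v" +
  fixes mul :: "'v \<Rightarrow> 'v \<Rightarrow> 'v" and A0 A1 :: "'v set"
  assumes mul_add_left: "mul (x + y) z = mul x z + mul y z"
    and mul_add_right: "mul x (y + z) = mul x y + mul x z"
    and mul_scale_left: "mul (scale c x) y = scale c (mul x y)"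
    and mul_scale_right: "mul x (scale c y) = scale c (mul x y)"
    and mul_assoc: "mul (mul x y) z = mul x (mul y z)"
    and subspace_even: "subspace A0" and subspace_odd: "subspace A1"
    and even_inter_odd: "A0 \<inter> A1 = {0}"
    and even_odd_decomp: "\<exists>a\<in>A0. \<exists>b\<in>A1. v = a + b"
    and mul_even_even: "x \<in> A0 \<Longrightarrow> y \<in> A0 \<Longrightarrow> mul x y \<in> A0"
    and mul_even_odd: "x \<in> A0 \<Longrightarrow> y \<in> A1 \<Longrightarrow> mul x y \<in> A1"
    and mul_odd_even: "x \<in> A1 \<Longrightarrow> y \<in> A0 \<Longrightarrow> mul x y \<in> A1"
    and mul_odd_odd: "x \<in> A1 \<Longrightarrow> y \<in> A1 \<Longrightarrow> mul x y \<in> A0"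

lemma fd_assoc_superalgebra_imp_assoc_superalgebra:
  "fd_assoc_superalgebra scale mul A0 A1 \<Longrightarrow> assoc_superalgebra scale mul A0 A1"
  unfolding fd_assoc_superalgebra_def assoc_superalgebra_def assoc_superalgebra_axioms_def
  by auto

context assoc_superalgebra
begin

abbreviation homogeneous :: "'v set" where
  "homogeneous \<equiv> A0 \<union> A1"

definition products :: "'v set \<Rightarrow> 'v set \<Rightarrow> 'v set" where
  "products X Y = {mul x y | x y. x \<in> X \<and> y \<in> Y}"

definition homogeneously_spanned :: "'v set \<Rightarrow> bool" where
  "homogeneously_spanned G \<longleftrightarrow> G \<subseteq> span (G \<inter> homogeneous)"

lemma mul_homogeneous: "x \<in> homogeneous \<Longrightarrow> y \<in> homogeneous \<Longrightarrow> mul x y \<in> homogeneous"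
  using mul_even_even mul_even_odd mul_odd_even mul_odd_odd by blast

lemma module_hom_mul_left: "module_hom scale scale (mul a)"
  by unfold_locales (simp_all add: mul_add_right mul_scale_right)

lemma module_hom_mul_right: "module_hom scale scale (\<lambda>x. mul x b)"
  by unfold_locales (simp_all add: mul_add_left mul_scale_left)

lemma mul_span_span:
  assumes "x \<in> span X" "y \<in> span Y"
  shows "mul x y \<in> span (products X Y)"
proof -
  have "mul x' y \<in> span (products X Y)" if "x' \<in> X" for x'
  proof -
    have "mul x' y \<in> span (mul x' ` Y)"
      using assms(2) module_hom.span_image[OF module_hom_mul_left] by blast
    also have "\<dots> \<subseteq> span (products X Y)"
      using that by (intro span_mono) (auto simp: products_def)
    finally show ?thesis .
  qed
  then have "(\<lambda>x. mul x y) ` X \<subseteq> span (products X Y)" by blast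
  then have "span ((\<lambda>x. mul x y) ` X) \<subseteq> span (products X Y)"
    by (simp add: span_minimal)
  then show ?thesis
    using assms(1) module_hom.span_image[OF module_hom_mul_right] by blast
qed

lemma products_mono: "X \<subseteq> X' \<Longrightarrow> Y \<subseteq> Y' \<Longrightarrow> products X Y \<subseteq> products X' Y'"
  unfolding products_def by blast

lemma products_Un_left: "products (X \<union> Y) Z = products X Z \<union> products Y Z"
  unfolding products_def by blast

lemma products_Un_right: "products X (Y \<union> Z) = products X Y \<union> products X Z"
  unfolding products_def by blast

lemma products_assoc: "products (products X Y) Z = products X (products Y Z)"
proof -
  have "products (products X Y) Z = {mul (mul x y) z | x y z. x \<in> X \<and> y \<in> Y \<and> z \<in> Z}"
    unfolding products_def by blast
  also have "\<dots> = {mul x (mul y z) | x y z. x \<in> X \<and> y \<in> Y \<and> z \<in> Z}"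
    by (simp only: mul_assoc)
  also have "\<dots> = products X (products Y Z)"
    unfolding products_def by blast
  finally show ?thesis .
qed

lemma homogeneously_spanned_UNIV: "homogeneously_spanned UNIV"
  unfolding homogeneously_spanned_def
proof
  fix v :: 'v
  obtain a b where "a \<in> A0" "b \<in> A1" "v = a + b" using even_odd_decomp by blast
  then show "v \<in> span (UNIV \<inter> homogeneous)" by (simp add: span_add span_base)
qed

lemma homogeneously_spanned_graded:
  assumes "\<And>x. x \<in> X \<Longrightarrow> \<exists>a\<in>X \<inter> A0. \<exists>b\<in>X \<inter> A1. x = a + b"
  shows "homogeneously_spanned X"
  unfolding homogeneously_spanned_def
  using assms by (blast intro: span_add span_base)

lemma homogeneously_spanned_Un:
  "homogeneously_spanned X \<Longrightarrow> homogeneously_spanned Y \<Longrightarrow> homogeneously_spanned (X \<union> Y)"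
  unfolding homogeneously_spanned_def
  by (meson Int_mono Un_upper1 Un_upper2 le_sup_iff order_refl span_mono subset_trans)

lemma homogeneously_spanned_products:
  assumes "homogeneously_spanned X" "homogeneously_spanned Y"
  shows "homogeneously_spanned (products X Y)"
  unfolding homogeneously_spanned_def
proof
  fix z assume "z \<in> products X Y"
  then obtain x y where z: "z = mul x y" "x \<in> X" "y \<in> Y" unfolding products_def by blast
  have "z \<in> span (products (X \<inter> homogeneous) (Y \<inter> homogeneous))"
    using z assms by (auto simp: homogeneously_spanned_def intro: mul_span_span)
  also have "products (X \<inter> homogeneous) (Y \<inter> homogeneous) \<subseteq> products X Y \<inter> homogeneous"
    using mul_homogeneous unfolding products_def by blast
  then have "span (products (X \<inter> homogeneous) (Y \<inter> homogeneous))
      \<subseteq> span (products X Y \<inter> homogeneous)" by (rule span_mono)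
  finally show "z \<in> span (products X Y \<inter> homogeneous)" .
qed

lemma span_homogeneously_spanned_graded:
  assumes "homogeneously_spanned G" "v \<in> span G"
  shows "\<exists>p\<in>span G \<inter> A0. \<exists>q\<in>span G \<inter> A1. v = p + q"
proof -
  have "span G \<subseteq> span (G \<inter> homogeneous)"
    using assms(1) unfolding homogeneously_spanned_def by (simp add: span_minimal)
  then have "v \<in> span ((G \<inter> A0) \<union> (G \<inter> A1))" using assms(2) by (auto simp: Int_Un_distrib)
  then obtain p q where pq: "v = p + q" "p \<in> span (G \<inter> A0)" "q \<in> span (G \<inter> A1)"
    unfolding span_Un by blast
  have "span (G \<inter> A0) \<subseteq> span G \<inter> A0"
    by (simp add: span_minimal span_mono subspace_even)
  moreover have "span (G \<inter> A1) \<subseteq> span G \<inter> A1"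
    by (simp add: span_minimal span_mono subspace_odd)
  ultimately show ?thesis using pq by blast
qed

lemma graded_ideal_span:
  assumes "homogeneously_spanned G"
    and "products UNIV G \<subseteq> span G" and "products G UNIV \<subseteq> span G"
  shows "graded_ideal scale mul A0 A1 (span G)"
  unfolding graded_ideal_in_def
proof (intro conjI ballI)
  fix a x assume "x \<in> span G"
  moreover have "mul a ` G \<subseteq> span G" "(\<lambda>x. mul x a) ` G \<subseteq> span G"
    using assms(2,3) unfolding products_def by blast+
  then have "span (mul a ` G) \<subseteq> span G" "span ((\<lambda>x. mul x a) ` G) \<subseteq> span G"
    by (simp_all add: span_minimal)
  ultimately show "mul a x \<in> span G" "mul x a \<in> span G"
    using module_hom.span_image[OF module_hom_mul_left]
      module_hom.span_image[OF module_hom_mul_right] by blast+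
qed (use assms(1) span_homogeneously_spanned_graded in auto)

lemma span_eq_minimal_graded_ideal:
  assumes I: "minimal_graded_ideal scale mul A0 A1 I"
    and "G \<subseteq> I" and "homogeneously_spanned G"
    and "products UNIV G \<subseteq> span G" and "products G UNIV \<subseteq> span G"
    and "g \<in> G" "g \<noteq> 0"
  shows "span G = I"
proof -
  have "subspace I" using I by (simp add: minimal_graded_ideal_def graded_ideal_in_def)
  then have "span G \<subseteq> I" using assms(2) by (intro span_minimal)
  moreover have "span G \<noteq> {0}" using assms(6,7) span_base by blast
  ultimately show ?thesis
    using I graded_ideal_span[OF assms(3-5)] unfolding minimal_graded_ideal_def by blast
qed

lemma graded_ideal_inD:
  assumes "graded_ideal_in scale mul A0 A1 S J"
  shows "J \<subseteq> S" "subspace J" "homogeneously_spanned J"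
    and "products S J \<subseteq> J" "products J S \<subseteq> J"
proof -
  show "J \<subseteq> S" "subspace J" using assms unfolding graded_ideal_in_def by simp_all
  show "homogeneously_spanned J"
    using assms unfolding graded_ideal_in_def by (intro homogeneously_spanned_graded) simp
  show "products S J \<subseteq> J" "products J S \<subseteq> J"
    using assms unfolding graded_ideal_in_def products_def by auto
qed

lemma minimal_graded_idealD:
  assumes "minimal_graded_ideal scale mul A0 A1 I"
  shows "subspace I" "homogeneously_spanned I"
    and "products UNIV I \<subseteq> I" "products I UNIV \<subseteq> I"
  using graded_ideal_inD[of UNIV I] assms unfolding minimal_graded_ideal_def by simp_all

lemma span_products_eq_minimal_graded_ideal:
  assumes I: "minimal_graded_ideal scale mul A0 A1 I"
    and "x \<in> I" "y \<in> I" "mul x y \<noteq> 0"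
  shows "span (products I I) = I"
proof (rule span_eq_minimal_graded_ideal[OF I])
  note ideal = minimal_graded_idealD[OF I]
  show "products I I \<subseteq> I"
    using ideal(3) products_mono[of I UNIV I I] by blast
  show "homogeneously_spanned (products I I)"
    using homogeneously_spanned_products[OF ideal(2) ideal(2)] .
  have "products UNIV (products I I) \<subseteq> products I I"
    using ideal(3) by (simp add: products_assoc[symmetric] products_mono)
  then show "products UNIV (products I I) \<subseteq> span (products I I)"
    using span_superset by blast
  have "products (products I I) UNIV \<subseteq> products I I"
    using ideal(4) by (simp add: products_assoc products_mono)
  then show "products (products I I) UNIV \<subseteq> span (products I I)"
    using span_superset by blast
  show "mul x y \<in> products I I" using assms(2,3) unfolding products_def by blast
qed fact

lemma span_products_UNIV_left_eq_minimal_graded_ideal: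
  assumes I: "minimal_graded_ideal scale mul A0 A1 I"
    and "x \<in> I" "mul a x \<noteq> 0"
  shows "span (products UNIV I) = I"
proof (rule span_eq_minimal_graded_ideal[OF I])
  note ideal = minimal_graded_idealD[OF I]
  show "products UNIV I \<subseteq> I" by (fact ideal(3))
  show "homogeneously_spanned (products UNIV I)"
    using homogeneously_spanned_UNIV ideal(2) by (rule homogeneously_spanned_products)
  have "products UNIV (products UNIV I) \<subseteq> products UNIV I"
    by (simp add: products_assoc[symmetric] products_mono)
  then show "products UNIV (products UNIV I) \<subseteq> span (products UNIV I)"
    using span_superset by blast
  have "products (products UNIV I) UNIV \<subseteq> products UNIV I"
    using ideal(4) by (simp add: products_assoc products_mono)
  then show "products (products UNIV I) UNIV \<subseteq> span (products UNIV I)"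
    using span_superset by blast
  show "mul a x \<in> products UNIV I" using assms(2) unfolding products_def by blast
qed fact

lemma span_products_UNIV_right_eq_minimal_graded_ideal:
  assumes I: "minimal_graded_ideal scale mul A0 A1 I"
    and "x \<in> I" "mul x b \<noteq> 0"
  shows "span (products I UNIV) = I"
proof (rule span_eq_minimal_graded_ideal[OF I])
  note ideal = minimal_graded_idealD[OF I]
  show "products I UNIV \<subseteq> I" by (fact ideal(4))
  show "homogeneously_spanned (products I UNIV)"
    using ideal(2) homogeneously_spanned_UNIV by (rule homogeneously_spanned_products)
  have "products UNIV (products I UNIV) \<subseteq> products I UNIV"
    using ideal(3) by (simp add: products_assoc[symmetric] products_mono)
  then show "products UNIV (products I UNIV) \<subseteq> span (products I UNIV)"
    using span_superset by blast
  have "products (products I UNIV) UNIV \<subseteq> products I UNIV"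
    by (simp add: products_assoc products_mono)
  then show "products (products I UNIV) UNIV \<subseteq> span (products I UNIV)"
    using span_superset by blast
  show "mul x b \<in> products I UNIV" using assms(2) unfolding products_def by blast
qed fact

lemma minimal_graded_ideal_in_annihilator:
  assumes I: "minimal_graded_ideal scale mul A0 A1 I" and "I \<subseteq> annihilator mul"
  shows "\<exists>x. (x \<in> A0 \<or> x \<in> A1) \<and> x \<in> annihilator mul \<and> I = range (\<lambda>c. scale c x)"
proof -
  have "I \<noteq> {0}" and graded: "\<forall>z\<in>I. \<exists>p\<in>I \<inter> A0. \<exists>q\<in>I \<inter> A1. z = p + q"
    using I unfolding minimal_graded_ideal_def graded_ideal_in_def by simp_all
  moreover have "0 \<in> I" using minimal_graded_idealD(1)[OF I] by (rule subspace_0)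
  ultimately obtain z where z: "z \<in> I" "z \<noteq> 0" by blast
  then obtain p q where "p \<in> I \<inter> A0" "q \<in> I \<inter> A1" "z = p + q"
    using graded by blast
  then obtain x where x: "x \<in> I" "x \<in> homogeneous" "x \<noteq> 0"
    using z by (cases "p = 0") auto
  then have ann: "x \<in> annihilator mul" using assms(2) by blast
  have "span {x} = I"
  proof (rule span_eq_minimal_graded_ideal[OF I])
    show "homogeneously_spanned {x}"
      using x unfolding homogeneously_spanned_def by (simp add: span_base)
    have "products UNIV {x} \<subseteq> {0}" "products {x} UNIV \<subseteq> {0}"
      using ann unfolding products_def annihilator_def by blast+
    then show "products UNIV {x} \<subseteq> span {x}" "products {x} UNIV \<subseteq> span {x}"
      using span_zero by blast+
  qed (use x in simp_all)
  then have "I = range (\<lambda>c. scale c x)" by (simp add: span_singleton)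
  then show ?thesis using x(2) ann by blast
qed

lemma minimal_graded_ideal_subset_span_cube:
  assumes I: "minimal_graded_ideal scale mul A0 A1 I"
    and "x \<in> I" "y \<in> I" "mul x y \<noteq> 0"
  shows "I \<subseteq> span (products (products I I) I)"
proof -
  have square: "span (products I I) = I"
    using span_products_eq_minimal_graded_ideal[OF assms] .
  have "products I I \<subseteq> span (products (products I I) I)"
  proof
    fix z assume "z \<in> products I I"
    then obtain u v where z: "z = mul u v" "u \<in> I" "v \<in> I" unfolding products_def by blast
    then have "u \<in> span (products I I)" "v \<in> span I" using square span_base by auto
    then show "z \<in> span (products (products I I) I)" unfolding z(1) by (rule mul_span_span)
  qed
  then have "span (products I I) \<subseteq> span (products (products I I) I)"
    by (simp add: span_minimal)
  then show ?thesis using square by simp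
qed

definition ideal_closure :: "'v set \<Rightarrow> 'v set" where
  "ideal_closure J = J \<union> products UNIV J \<union> products J UNIV \<union> products UNIV (products J UNIV)"

lemma products_UNIV_ideal_closure_subset: "products UNIV (ideal_closure J) \<subseteq> ideal_closure J"
  unfolding ideal_closure_def products_Un_right products_assoc[symmetric]
  using products_mono[of "products UNIV UNIV" UNIV J J]
    products_mono[of "products (products UNIV UNIV) J" "products UNIV J" UNIV UNIV]
  by blast

lemma products_ideal_closure_UNIV_subset: "products (ideal_closure J) UNIV \<subseteq> ideal_closure J"
  unfolding ideal_closure_def products_Un_left products_assoc
  using products_mono[of J J "products UNIV UNIV" UNIV]
    products_mono[of UNIV UNIV "products J (products UNIV UNIV)" "products J UNIV"]
  by blast

lemma ideal_closure_subset:
  assumes "J \<subseteq> I" "products UNIV I \<subseteq> I" "products I UNIV \<subseteq> I"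
  shows "ideal_closure J \<subseteq> I"
proof -
  have "products UNIV J \<subseteq> I" "products J UNIV \<subseteq> I"
    using assms products_mono by blast+
  moreover have "products UNIV (products J UNIV) \<subseteq> I"
    using calculation(2) assms(2) products_mono[of UNIV UNIV "products J UNIV" I] by blast
  ultimately show ?thesis using assms(1) unfolding ideal_closure_def by blast
qed

lemma homogeneously_spanned_ideal_closure:
  "homogeneously_spanned J \<Longrightarrow> homogeneously_spanned (ideal_closure J)"
  unfolding ideal_closure_def
  by (intro homogeneously_spanned_Un homogeneously_spanned_products homogeneously_spanned_UNIV)

lemma products_products_ideal_closure_subset:
  assumes "products UNIV I \<subseteq> I" "products I UNIV \<subseteq> I"
    and "products I J \<subseteq> J" "products J I \<subseteq> J"
  shows "products (products I (ideal_closure J)) I \<subseteq> J"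
proof
  have in_I: "mul u a \<in> I" "mul a u \<in> I" if "u \<in> I" for u a
    using that assms(1,2) unfolding products_def by blast+
  have in_J: "mul u (mul j v) \<in> J" if "u \<in> I" "j \<in> J" "v \<in> I" for u j v
    using that assms(3,4) unfolding products_def by blast
  fix z assume "z \<in> products (products I (ideal_closure J)) I"
  then obtain u g v where z: "z = mul (mul u g) v" "u \<in> I" "v \<in> I"
    and g: "g \<in> ideal_closure J" unfolding products_def by blast
  from g obtain j a b where "j \<in> J"
    and "g = j \<or> g = mul a j \<or> g = mul j b \<or> g = mul a (mul j b)"
    unfolding ideal_closure_def products_def by blast
  then show "z \<in> J"
    using in_J[of u j v] in_J[of "mul u a" j v] in_J[of u j "mul b v"] in_J[of "mul u a" j "mul b v"]
      z in_I by (auto simp: mul_assoc)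
qed

lemma simple_sub_if_minimal_graded_ideal:
  assumes I: "minimal_graded_ideal scale mul A0 A1 I"
    and "x \<in> I" "y \<in> I" "mul x y \<noteq> 0"
  shows "simple_sub scale mul A0 A1 I"
  unfolding simple_sub_def
proof (intro conjI allI impI)
  show "\<exists>x\<in>I. \<exists>y\<in>I. mul x y \<noteq> 0" using assms(2-4) by blast
  note ideal = minimal_graded_idealD[OF I]
  fix J assume "graded_ideal_in scale mul A0 A1 I J"
  note J = graded_ideal_inD[OF this]
  show "J = {0} \<or> J = I"
  proof (cases "J = {0}")
    case False
    then obtain j where j: "j \<in> J" "j \<noteq> 0" using J(2) subspace_0 by blast
    have closure: "span (ideal_closure J) = I"
    proof (rule span_eq_minimal_graded_ideal[OF I])
      show "ideal_closure J \<subseteq> I" using J(1) ideal(3,4) by (rule ideal_closure_subset)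
      show "homogeneously_spanned (ideal_closure J)"
        using J(3) by (rule homogeneously_spanned_ideal_closure)
      show "products UNIV (ideal_closure J) \<subseteq> span (ideal_closure J)"
        using products_UNIV_ideal_closure_subset span_superset by blast
      show "products (ideal_closure J) UNIV \<subseteq> span (ideal_closure J)"
        using products_ideal_closure_UNIV_subset span_superset by blast
      show "j \<in> ideal_closure J" using j unfolding ideal_closure_def by blast
    qed fact
    have "products (products I I) I \<subseteq> J"
    proof
      fix z assume "z \<in> products (products I I) I"
      then obtain u w v where z: "z = mul (mul u w) v" "u \<in> I" "w \<in> I" "v \<in> I"
        unfolding products_def by blast
      have "mul u w \<in> span (products I (ideal_closure J))"
        using z closure by (intro mul_span_span) (auto intro: span_base)
      moreover have "v \<in> span I" using z(4) by (rule span_base)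
      ultimately have "z \<in> span (products (products I (ideal_closure J)) I)"
        unfolding z(1) by (rule mul_span_span)
      also have "\<dots> \<subseteq> J"
        using products_products_ideal_closure_subset[OF ideal(3,4) J(4,5)] J(2)
        by (rule span_minimal)
      finally show "z \<in> J" .
    qed
    then have "I \<subseteq> J"
      using minimal_graded_ideal_subset_span_cube[OF assms] J(2) span_minimal by blast
    then show ?thesis using J(1) by blast
  qed simp
qed

end

lemma mul_right_zero_iff_mul_left_zero:
  fixes B :: "'v::ab_group_add \<Rightarrow> 'v \<Rightarrow> 'k::field"
  assumes "homogeneous_symmetric_structure scale mul A0 A1 B"
  shows "(\<forall>b. mul x b = 0) \<longleftrightarrow> (\<forall>a. mul a x = 0)"
proof -
  have add_left: "\<forall>x y z. B (x + y) z = B x z + B y z"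
    and add_right: "\<forall>x y z. B x (y + z) = B x y + B x z"
    and assoc: "\<forall>x y z. B (mul x y) z = B x (mul y z)"
    and nondegenerate_left: "\<forall>x. (\<forall>y. B x y = 0) \<longrightarrow> x = 0"
    and nondegenerate_right: "\<forall>y. (\<forall>x. B x y = 0) \<longrightarrow> y = 0"
    using assms unfolding homogeneous_symmetric_structure_def by simp_all
  have zero_left: "B 0 y = 0" and zero_right: "B y 0 = 0" for y
    using add_left add_right by (metis add_cancel_right_right)+
  show ?thesis
  proof
    assume "\<forall>b. mul x b = 0"
    then show "\<forall>a. mul a x = 0"
      using nondegenerate_left assoc zero_right by metis
  next
    assume "\<forall>a. mul a x = 0"
    then show "\<forall>b. mul x b = 0"
      using nondegenerate_right assoc zero_left by metis
  qed
qed

theorem mainTheorem8: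
  fixes scale :: "'k::field_char_0 \<Rightarrow> 'v::ab_group_add \<Rightarrow> 'v"
    and mul :: "'v \<Rightarrow> 'v \<Rightarrow> 'v"
    and A0 A1 I :: "'v set"
    and B :: "'v \<Rightarrow> 'v \<Rightarrow> 'k"
  assumes "algebraically_closed TYPE('k)"
    and "fd_assoc_superalgebra scale mul A0 A1"
    and "homogeneous_symmetric_structure scale mul A0 A1 B"
    and "minimal_graded_ideal scale mul A0 A1 I"
  shows "simple_sub scale mul A0 A1 I
     \<or> ((\<forall>x\<in>I. \<forall>y\<in>I. mul x y = 0) \<and>
        module.span scale {mul a x | a x. x \<in> I} = I \<and>
        I = module.span scale {mul x a | a x. x \<in> I})
     \<or> (\<exists>x. (x \<in> A0 \<or> x \<in> A1) \<and> x \<in> annihilator mul \<and> I = range (\<lambda>c. scale c x))"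
proof -
  interpret assoc_superalgebra scale mul A0 A1
    using assms(2) by (rule fd_assoc_superalgebra_imp_assoc_superalgebra)
  note sides = mul_right_zero_iff_mul_left_zero[OF assms(3)]
  consider (non_null) x y where "x \<in> I" "y \<in> I" "mul x y \<noteq> 0"
    | (null) a x where "\<forall>x\<in>I. \<forall>y\<in>I. mul x y = 0" "x \<in> I" "mul a x \<noteq> 0"
    | (annihilated) "I \<subseteq> annihilator mul"
    using sides unfolding annihilator_def by blast
  then show ?thesis
  proof cases
    case non_null
    then show ?thesis using simple_sub_if_minimal_graded_ideal[OF assms(4)] by blast
  next
    case null
    then obtain b where "mul x b \<noteq> 0" using sides by blast
    then have "span (products UNIV I) = I" "span (products I UNIV) = I"
      using span_products_UNIV_left_eq_minimal_graded_ideal[OF assms(4) null(2,3)]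
        span_products_UNIV_right_eq_minimal_graded_ideal[OF assms(4) null(2)] by simp_all
    moreover have "products UNIV I = {mul a x | a x. x \<in> I}"
      and "products I UNIV = {mul x a | a x. x \<in> I}"
      unfolding products_def by blast+
    ultimately show ?thesis using null(1) by simp
  next
    case annihilated
    then show ?thesis using minimal_graded_ideal_in_annihilator[OF assms(4)] by blast
  qed
qed

end
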